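(* Let $U:\mathbb{R}^d\times\mathcal{P}_2(\mathbb{R}^d)\to\mathbb{R}^d$ be continuous and $L^2$-monotone. Then for every $\mu\in\mathcal{P}_2(\mathbb{R}^d)$ the map $x\mapsto U(x,\mu)$ is monotone: $(U(x,\mu)-U(y,\mu))\cdot(x-y)\ge0$ for all $x,y\in\mathbb{R}^d$.
   Context: $(\Omega,\mathcal{A},\mathbb{P})$ is a standard (atomless) probability space and $L^2(\Omega,\mathbb{R}^d)$ the square integrable random vectors; $\mathcal{L}(X)$ is the law of $X$. $U$ is $L^2$-monotone if $\mathbb{E}[(U(X,\mathcal{L}(X))-U(Y,\mathcal{L}(Y)))\cdot(X-Y)]\ge0$ for all $X,Y\in L^2(\Omega,\mathbb{R}^d)$. $\mathcal{P}_2(\mathbb{R}^d)$ carries the 2-Wasserstein distance. *)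

theory Defs
  imports "HOL-Probability.Probability"
begin

definition atomless :: "'b measure \<Rightarrow> bool" where
  "atomless M \<longleftrightarrow> (\<forall>A\<in>sets M. measure M A > 0 \<longrightarrow>
      (\<exists>B\<in>sets M. B \<subseteq> A \<and> 0 < measure M B \<and> measure M B < measure M A))"

definition L2 :: "'b measure \<Rightarrow> ('b \<Rightarrow> 'a::euclidean_space) set" where
  "L2 M = {X. X \<in> borel_measurable M \<and> integrable M (\<lambda>\<omega>. (norm (X \<omega>))\<^sup>2)}"

definition law :: "'b measure \<Rightarrow> ('b \<Rightarrow> 'a::euclidean_space) \<Rightarrow> 'a measure" where
  "law M X = distr M borel X"

definition P2 :: "'a::euclidean_space measure set" where
  "P2 = {\<mu>. prob_space \<mu> \<and> sets \<mu> = sets (borel :: 'a measure) \<and>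
             integrable \<mu> (\<lambda>x. (norm x)\<^sup>2)}"

definition couplings :: "'a::euclidean_space measure \<Rightarrow> 'a measure \<Rightarrow> ('a \<times> 'a) measure set" where
  "couplings \<mu> \<nu> = {\<pi>. prob_space \<pi> \<and> sets \<pi> = sets (borel :: ('a \<times> 'a) measure) \<and>
                      distr \<pi> borel fst = \<mu> \<and> distr \<pi> borel snd = \<nu>}"

definition W2 :: "'a::euclidean_space measure \<Rightarrow> 'a measure \<Rightarrow> real" where
  "W2 \<mu> \<nu> = sqrt (enn2real (INF \<pi>\<in>couplings \<mu> \<nu>.
                 \<integral>\<^sup>+ p. ennreal ((norm (fst p - snd p))\<^sup>2) \<partial>\<pi>))"

definition continuous_P2 :: "('a::euclidean_space \<Rightarrow> 'a measure \<Rightarrow> 'a) \<Rightarrow> bool" where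
  "continuous_P2 U \<longleftrightarrow> (\<forall>x. \<forall>\<mu>\<in>P2. \<forall>e>0. \<exists>\<delta>>0. \<forall>y. \<forall>\<nu>\<in>P2.
      dist x y < \<delta> \<longrightarrow> W2 \<mu> \<nu> < \<delta> \<longrightarrow> dist (U x \<mu>) (U y \<nu>) < e)"

definition L2_monotone :: "'b measure \<Rightarrow> ('a::euclidean_space \<Rightarrow> 'a measure \<Rightarrow> 'a) \<Rightarrow> bool" where
  "L2_monotone M U \<longleftrightarrow> (\<forall>X\<in>L2 M. \<forall>Y\<in>L2 M.
      (\<integral>\<omega>. (U (X \<omega>) (law M X) - U (Y \<omega>) (law M Y)) \<bullet> (X \<omega> - Y \<omega>) \<partial>M) \<ge> 0)"

end

theory Submission
  imports Defs
begin

text \<open>Since the space is atomless, it carries two finitely-valued random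
  variables \<open>X\<close> and \<open>Y\<close> that agree with a fine quantization of \<open>\<mu>\<close> outside an event of small
  probability \<open>\<epsilon> > 0\<close> and equal \<open>x\<close> and \<open>y\<close> on it. L2-monotonicity for \<open>X\<close>, \<open>Y\<close> reads
  \<open>\<epsilon> (U(x, law X) - U(y, law Y)) \<bullet> (x - y) \<ge> 0\<close>, while both laws are W2-close to \<open>\<mu>\<close>.
  Letting the perturbation vanish, continuity of \<open>U\<close> gives the claim.\<close>

context prob_space
begin

lemma atomless_small_event:
  assumes atomless: "atomless M" and A: "A \<in> events" "prob A > 0" and \<eta>: "\<eta> > 0"
  shows "\<exists>B\<in>events. B \<subseteq> A \<and> 0 < prob B \<and> prob B < \<eta>"
proof -
  have halving: "\<exists>B\<in>events. B \<subseteq> A \<and> 0 < prob B \<and> prob B \<le> prob A / 2 ^ n" for n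
  proof (induction n)
    case 0
    then show ?case using A by auto
  next
    case (Suc n)
    then obtain B where B: "B \<in> events" "B \<subseteq> A" "0 < prob B" "prob B \<le> prob A / 2 ^ n"
      by blast
    then obtain C where C: "C \<in> events" "C \<subseteq> B" "0 < prob C" "prob C < prob B"
      using atomless unfolding atomless_def by blast
    have "prob (B - C) = prob B - prob C"
      using B C by (simp add: finite_measure_Diff)
    then consider "prob C \<le> prob B / 2" | "prob (B - C) \<le> prob B / 2" "0 < prob (B - C)"
      using C by fastforce
    then show ?case
      using B C by cases (force intro: bexI[of _ C], force intro: bexI[of _ "B - C"])
  qed
  have "(\<lambda>n. prob A / 2 ^ n) \<longlonglongrightarrow> 0"
    by (intro LIMSEQ_divide_realpow_zero) auto
  from order_tendstoD(2)[OF this \<eta>] obtain n where "prob A / 2 ^ n < \<eta>"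
    by (auto simp: eventually_sequentially)
  with halving[of n] show ?thesis
    by (meson order_le_less_trans)
qed

lemma half_maximal_subevent:
  assumes A: "A \<in> events" and B: "B \<in> events" "prob B \<le> t"
  obtains C where "C \<in> events" "C \<subseteq> A - B" "prob B + prob C \<le> t"
    "\<And>D. D \<in> events \<Longrightarrow> D \<subseteq> A - B \<Longrightarrow> prob B + prob D \<le> t \<Longrightarrow> prob D \<le> 2 * prob C"
proof -
  define admissible where "admissible C \<longleftrightarrow> C \<in> events \<and> C \<subseteq> A - B \<and> prob B + prob C \<le> t" for C
  define s where "s = Sup (prob ` Collect admissible)"
  have "admissible {}"
    using B by (simp add: admissible_def)
  then have ne: "prob ` Collect admissible \<noteq> {}"
    by blast
  have bdd: "bdd_above (prob ` Collect admissible)"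
    by (intro bdd_aboveI[of _ 1]) auto
  have le_s: "prob D \<le> s" if "admissible D" for D
    unfolding s_def using that bdd by (intro cSup_upper) auto
  have "\<exists>C. admissible C \<and> s \<le> 2 * prob C"
  proof (cases "s = 0")
    case True
    then show ?thesis using \<open>admissible {}\<close> by auto
  next
    case False
    then have "s / 2 < s"
      using le_s[OF \<open>admissible {}\<close>] by simp
    then obtain C where "admissible C" "s / 2 < prob C"
      unfolding s_def using less_cSup_iff[OF ne bdd] by auto
    then show ?thesis by (intro exI[of _ C]) auto
  qed
  then show ?thesis
    using that le_s unfolding admissible_def by fastforce
qed

lemma greedy_subevent_sequence:
  assumes A: "A \<in> events" and t: "0 \<le> t"
  obtains Bs where "incseq Bs" "\<And>n. Bs n \<in> events" "\<And>n. Bs n \<subseteq> A" "\<And>n. prob (Bs n) \<le> t"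
    "\<And>n D. D \<in> events \<Longrightarrow> D \<subseteq> A - Bs n \<Longrightarrow> prob (Bs n) + prob D \<le> t \<Longrightarrow>
      prob D \<le> 2 * (prob (Bs (Suc n)) - prob (Bs n))"
proof -
  define admissible where "admissible B \<longleftrightarrow> B \<in> events \<and> B \<subseteq> A \<and> prob B \<le> t" for B
  have "\<forall>B. \<exists>C. admissible B \<longrightarrow> C \<in> events \<and> C \<subseteq> A - B \<and> prob B + prob C \<le> t \<and>
      (\<forall>D\<in>events. D \<subseteq> A - B \<longrightarrow> prob B + prob D \<le> t \<longrightarrow> prob D \<le> 2 * prob C)"
    using half_maximal_subevent[OF A, of _ t] unfolding admissible_def
    by (metis (no_types, lifting))
  from choice[OF this] obtain next_event where next_event: "\<And>B. admissible B \<Longrightarrow>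
      next_event B \<in> events \<and> next_event B \<subseteq> A - B \<and> prob B + prob (next_event B) \<le> t \<and>
      (\<forall>D\<in>events. D \<subseteq> A - B \<longrightarrow> prob B + prob D \<le> t \<longrightarrow> prob D \<le> 2 * prob (next_event B))"
    by blast
  define Bs where "Bs n = ((\<lambda>B. B \<union> next_event B) ^^ n) {}" for n
  have Bs_Suc: "Bs (Suc n) = Bs n \<union> next_event (Bs n)" for n
    by (simp add: Bs_def)
  have admissible_Bs: "admissible (Bs n)" for n
  proof (induction n)
    case 0
    then show ?case using t by (simp add: admissible_def Bs_def)
  next
    case (Suc n)
    then have "prob (Bs (Suc n)) \<le> prob (Bs n) + prob (next_event (Bs n))"
      using next_event[OF Suc] unfolding admissible_def Bs_Suc
      by (intro measure_Un_le) auto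
    with Suc next_event[OF Suc] show ?case
      unfolding admissible_def Bs_Suc by auto
  qed
  have prob_Bs_Suc: "prob (Bs (Suc n)) = prob (Bs n) + prob (next_event (Bs n))" for n
    using admissible_Bs[of n] next_event[OF admissible_Bs[of n]] unfolding admissible_def Bs_Suc
    by (intro finite_measure_Union) auto
  show ?thesis
  proof (rule that)
    show "incseq Bs"
      by (rule incseq_SucI) (simp add: Bs_Suc)
    show "Bs n \<in> events" "Bs n \<subseteq> A" "prob (Bs n) \<le> t" for n
      using admissible_Bs[of n] by (simp_all add: admissible_def)
    show "prob D \<le> 2 * (prob (Bs (Suc n)) - prob (Bs n))"
      if "D \<in> events" "D \<subseteq> A - Bs n" "prob (Bs n) + prob D \<le> t" for n D
      using next_event[OF admissible_Bs[of n]] that by (simp add: prob_Bs_Suc)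
  qed
qed

lemma maximal_subevent_below:
  assumes A: "A \<in> events" and t: "0 \<le> t"
  obtains B where "B \<in> events" "B \<subseteq> A" "prob B \<le> t"
    "\<And>D. D \<in> events \<Longrightarrow> D \<subseteq> A - B \<Longrightarrow> prob B + prob D \<le> t \<Longrightarrow> prob D = 0"
proof -
  obtain Bs where Bs: "incseq Bs" "\<And>n. Bs n \<in> events" "\<And>n. Bs n \<subseteq> A" "\<And>n. prob (Bs n) \<le> t"
    and greedy: "\<And>n D. D \<in> events \<Longrightarrow> D \<subseteq> A - Bs n \<Longrightarrow> prob (Bs n) + prob D \<le> t \<Longrightarrow>
      prob D \<le> 2 * (prob (Bs (Suc n)) - prob (Bs n))"
    using greedy_subevent_sequence[OF A t] by blast
  define B where "B = (\<Union>n. Bs n)"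
  have lim: "(\<lambda>n. prob (Bs n)) \<longlonglongrightarrow> prob B"
    unfolding B_def using Bs by (intro Lim_measure_incseq) auto
  have "(\<lambda>n. 2 * (prob (Bs (Suc n)) - prob (Bs n))) \<longlonglongrightarrow> 2 * (prob B - prob B)"
    by (intro tendsto_mult tendsto_const tendsto_diff LIMSEQ_Suc lim)
  then have steps_vanish: "(\<lambda>n. 2 * (prob (Bs (Suc n)) - prob (Bs n))) \<longlonglongrightarrow> 0"
    by simp
  show ?thesis
  proof (rule that)
    show "B \<in> events" "B \<subseteq> A"
      using Bs unfolding B_def by auto
    show "prob B \<le> t"
      using lim Bs by (intro LIMSEQ_le_const2) auto
    fix D assume D: "D \<in> events" "D \<subseteq> A - B" "prob B + prob D \<le> t"
    have D_le: "prob D \<le> 2 * (prob (Bs (Suc n)) - prob (Bs n))" for n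
    proof (rule greedy)
      have "Bs n \<subseteq> B"
        unfolding B_def by blast
      then show "D \<subseteq> A - Bs n" "prob (Bs n) + prob D \<le> t"
        using \<open>B \<in> events\<close> D(2,3) finite_measure_mono[of "Bs n" B] by auto
    qed (rule D(1))
    have "prob D \<le> 0"
      by (intro LIMSEQ_le_const[OF steps_vanish] exI allI impI D_le)
    then show "prob D = 0"
      by (simp add: measure_le_0_iff)
  qed
qed

lemma atomless_event_of_measure:
  assumes atomless: "atomless M" and A: "A \<in> events" and t: "0 \<le> t" "t \<le> prob A"
  shows "\<exists>B\<in>events. B \<subseteq> A \<and> prob B = t"
proof -
  obtain B where B: "B \<in> events" "B \<subseteq> A" "prob B \<le> t"
    and maximal: "\<And>D. D \<in> events \<Longrightarrow> D \<subseteq> A - B \<Longrightarrow> prob B + prob D \<le> t \<Longrightarrow> prob D = 0"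
    using maximal_subevent_below[OF A t(1)] by blast
  have "prob B = t"
  proof (rule ccontr)
    assume "prob B \<noteq> t"
    with B have "0 < t - prob B"
      by simp
    moreover have "0 < prob (A - B)"
      using A B t \<open>0 < t - prob B\<close> by (simp add: finite_measure_Diff)
    ultimately obtain D where "D \<in> events" "D \<subseteq> A - B" "0 < prob D" "prob D < t - prob B"
      using atomless_small_event[OF atomless, of "A - B" "t - prob B"] A B by blast
    with maximal show False
      by force
  qed
  with B show ?thesis
    by blast
qed

lemma atomless_partition:
  assumes atomless: "atomless M" and R: "finite R" "R \<noteq> {}" and A: "A \<in> events"
    and w: "(\<Sum>r\<in>R. w r) = prob A" "\<And>r. r \<in> R \<Longrightarrow> 0 \<le> w r"
  shows "\<exists>F. (\<forall>r\<in>R. F r \<in> events \<and> prob (F r) = w r) \<and> disjoint_family_on F R \<and> (\<Union>r\<in>R. F r) = A"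
  using R A w
proof (induction R arbitrary: A rule: finite_ne_induct)
  case (singleton r)
  then show ?case
    by (intro exI[of _ "\<lambda>_. A"]) (auto simp: disjoint_family_on_def)
next
  case (insert r R)
  have "0 \<le> (\<Sum>r\<in>R. w r)"
    using insert by (intro sum_nonneg) auto
  then have "w r \<le> prob A" "0 \<le> w r"
    using insert by simp_all
  then obtain B where B: "B \<in> events" "B \<subseteq> A" "prob B = w r"
    using atomless_event_of_measure[OF atomless insert.prems(1)] by blast
  have "(\<Sum>r\<in>R. w r) = prob (A - B)"
    using B insert by (simp add: finite_measure_Diff)
  then obtain F where F: "\<forall>r\<in>R. F r \<in> events \<and> prob (F r) = w r"
      "disjoint_family_on F R" "(\<Union>r\<in>R. F r) = A - B"
    using insert.IH[of "A - B"] B insert.prems by auto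
  show ?case
  proof (intro exI conjI)
    show "\<forall>r'\<in>insert r R. (F(r := B)) r' \<in> events \<and> prob ((F(r := B)) r') = w r'"
      using F B by auto
    have "disjoint_family_on (F(r := B)) R"
      using F(2) \<open>r \<notin> R\<close> unfolding disjoint_family_on_def by auto
    moreover have "(\<Union>r'\<in>R. (F(r := B)) r') = A - B"
      using F(3) \<open>r \<notin> R\<close> by auto
    ultimately show "disjoint_family_on (F(r := B)) (insert r R)"
      using \<open>r \<notin> R\<close> by (subst disjoint_family_on_insert) auto
    show "(\<Union>r'\<in>insert r R. (F(r := B)) r') = A"
      using F(3) \<open>r \<notin> R\<close> B(2) by auto
  qed
qed

end

lemma emeasure_distr_finite_range:
  fixes X :: "'b \<Rightarrow> 'c::t1_space"
  assumes X: "X \<in> borel_measurable M" and R: "finite R" "X ` space M \<subseteq> R" and S: "S \<in> sets borel"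
  shows "emeasure (distr M borel X) S = (\<Sum>r\<in>S \<inter> R. emeasure M (X -` {r} \<inter> space M))"
proof -
  have "X -` S \<inter> space M = X -` (S \<inter> R) \<inter> space M"
    using R by auto
  then have "emeasure (distr M borel X) S = emeasure (distr M borel X) (S \<inter> R)"
    using X S R by (simp add: emeasure_distr finite_imp_closed)
  also have "\<dots> = (\<Sum>r\<in>S \<inter> R. emeasure (distr M borel X) {r})"
    using R by (intro emeasure_eq_sum_singleton) auto
  also have "\<dots> = (\<Sum>r\<in>S \<inter> R. emeasure M (X -` {r} \<inter> space M))"
    using X by (intro sum.cong refl) (simp add: emeasure_distr)
  finally show ?thesis .
qed

lemma distr_eq_finite_range:
  fixes X :: "'b \<Rightarrow> 'c::t1_space"
  assumes X: "X \<in> borel_measurable M" "X ` space M \<subseteq> R"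
    and Y: "Y \<in> borel_measurable N" "Y ` space N \<subseteq> R" and R: "finite R"
    and eq: "\<And>r. r \<in> R \<Longrightarrow> emeasure M (X -` {r} \<inter> space M) = emeasure N (Y -` {r} \<inter> space N)"
  shows "distr M borel X = distr N borel Y"
proof (rule measure_eqI)
  fix S assume "S \<in> sets (distr M borel X)"
  then have S: "S \<in> sets borel"
    by simp
  have "emeasure (distr M borel X) S = (\<Sum>r\<in>S \<inter> R. emeasure M (X -` {r} \<inter> space M))"
    using emeasure_distr_finite_range[OF X(1) R X(2) S] .
  also have "\<dots> = (\<Sum>r\<in>S \<inter> R. emeasure N (Y -` {r} \<inter> space N))"
    using eq by (intro sum.cong) auto
  also have "\<dots> = emeasure (distr N borel Y) S"
    using emeasure_distr_finite_range[OF Y(1) R Y(2) S] ..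
  finally show "emeasure (distr M borel X) S = emeasure (distr N borel Y) S" .
qed simp

lemma measurable_function_of_partition:
  fixes R :: "'d::euclidean_space set"
  assumes R: "finite R" and F: "\<And>r. r \<in> R \<Longrightarrow> F r \<in> sets M" "disjoint_family_on F R"
    "(\<Union>r\<in>R. F r) = space M"
  obtains W where "W \<in> borel_measurable M" "W ` space M \<subseteq> R" "\<And>r. r \<in> R \<Longrightarrow> W -` {r} \<inter> space M = F r"
proof
  define W where "W \<omega> = (\<Sum>r\<in>R. indicator (F r) \<omega> *\<^sub>R r)" for \<omega>
  have W_eq: "W \<omega> = r" if "r \<in> R" "\<omega> \<in> F r" for r \<omega>
  proof -
    have "W \<omega> = (\<Sum>r'\<in>R. if r' = r then r else 0)"
      unfolding W_def using F(2) that
      by (intro sum.cong refl) (auto simp: disjoint_family_on_def indicator_def)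
    then show ?thesis
      using that R by simp
  qed
  have cover: "\<exists>r\<in>R. \<omega> \<in> F r" if "\<omega> \<in> space M" for \<omega>
    using F(3) that by blast
  show "W \<in> borel_measurable M"
    unfolding W_def using F(1)
    by (intro borel_measurable_sum borel_measurable_scaleR borel_measurable_indicator) auto
  show "W ` space M \<subseteq> R"
    using W_eq cover by fastforce
  show "W -` {r} \<inter> space M = F r" if "r \<in> R" for r
    using W_eq cover F(3) that by fastforce
qed

lemma atomless_realize_finite_distr:
  fixes Q :: "'c \<Rightarrow> 'd::euclidean_space"
  assumes M: "prob_space M" "atomless M" and N: "prob_space N"
    and Q: "Q \<in> borel_measurable N" "finite R" "Q ` space N \<subseteq> R"
  obtains W where "W \<in> borel_measurable M" "W ` space M \<subseteq> R" "distr M borel W = distr N borel Q"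
proof -
  interpret M: prob_space M by fact
  interpret N: prob_space N by fact
  define w where "w r = measure N (Q -` {r} \<inter> space N)" for r
  have "R \<noteq> {}"
    using Q N.not_empty by auto
  have "(\<Sum>r\<in>R. w r) = measure N (\<Union>r\<in>R. Q -` {r} \<inter> space N)"
    unfolding w_def using Q by (intro N.finite_measure_finite_Union[symmetric])
      (auto simp: disjoint_family_on_def)
  also have "(\<Union>r\<in>R. Q -` {r} \<inter> space N) = space N"
    using Q by auto
  finally have "(\<Sum>r\<in>R. w r) = M.prob (space M)"
    by (simp add: N.prob_space M.prob_space)
  then obtain F where F: "\<forall>r\<in>R. F r \<in> sets M \<and> measure M (F r) = w r"
      "disjoint_family_on F R" "(\<Union>r\<in>R. F r) = space M"
    using M.atomless_partition[OF M(2) Q(2) \<open>R \<noteq> {}\<close> sets.top[of M], of w] by (auto simp: w_def)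
  then obtain W where W: "W \<in> borel_measurable M" "W ` space M \<subseteq> R"
    and W_vimage: "\<And>r. r \<in> R \<Longrightarrow> W -` {r} \<inter> space M = F r"
    using measurable_function_of_partition[OF Q(2)] by metis
  have "distr M borel W = distr N borel Q"
    using W Q(1,3,2)
  proof (rule distr_eq_finite_range)
    fix r assume "r \<in> R"
    then show "emeasure M (W -` {r} \<inter> space M) = emeasure N (Q -` {r} \<inter> space N)"
      using F W_vimage by (simp add: M.emeasure_eq_measure N.emeasure_eq_measure w_def)
  qed
  with W that show ?thesis
    by blast
qed

lemma W2_distr_le:
  fixes f g :: "'b \<Rightarrow> 'a::euclidean_space"
  assumes N: "prob_space N" and f: "f \<in> borel_measurable N" and g: "g \<in> borel_measurable N"
    and c: "(\<integral>\<^sup>+\<omega>. ennreal ((norm (f \<omega> - g \<omega>))\<^sup>2) \<partial>N) \<le> ennreal c" "0 \<le> c"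
  shows "W2 (distr N borel f) (distr N borel g) \<le> sqrt c"
proof -
  define \<pi> where "\<pi> = distr N borel (\<lambda>\<omega>. (f \<omega>, g \<omega>))"
  have fg: "(\<lambda>\<omega>. (f \<omega>, g \<omega>)) \<in> borel_measurable N"
    using f g by (simp add: borel_prod[symmetric])
  have "\<pi> \<in> couplings (distr N borel f) (distr N borel g)"
    unfolding couplings_def \<pi>_def
    using fg prob_space.prob_space_distr[OF N fg]
    by (simp add: distr_distr comp_def borel_prod[symmetric])
  then have "(INF \<pi>\<in>couplings (distr N borel f) (distr N borel g).
      \<integral>\<^sup>+ p. ennreal ((norm (fst p - snd p))\<^sup>2) \<partial>\<pi>) \<le> \<integral>\<^sup>+ p. ennreal ((norm (fst p - snd p))\<^sup>2) \<partial>\<pi>"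
    by (rule INF_lower)
  also have "\<dots> = (\<integral>\<^sup>+\<omega>. ennreal ((norm (f \<omega> - g \<omega>))\<^sup>2) \<partial>N)"
    unfolding \<pi>_def using fg by (subst nn_integral_distr) (auto simp: borel_prod[symmetric])
  finally show ?thesis
    unfolding W2_def using c by (auto intro!: enn2real_leI)
qed

lemma W2_nonneg: "0 \<le> W2 \<mu> \<nu>"
  by (simp add: W2_def)

lemma finite_range_L2_P2:
  fixes X :: "'b \<Rightarrow> 'a::euclidean_space"
  assumes M: "prob_space M" and X: "X \<in> borel_measurable M" "finite (X ` space M)"
  shows "X \<in> L2 M" and "law M X \<in> P2"
proof -
  interpret prob_space M by fact
  define B where "B = Max ((\<lambda>v. (norm v)\<^sup>2) ` X ` space M)"
  have "(norm (X \<omega>))\<^sup>2 \<le> B" if "\<omega> \<in> space M" for \<omega>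
    unfolding B_def using X that by (intro Max_ge) auto
  then have int: "integrable M (\<lambda>\<omega>. (norm (X \<omega>))\<^sup>2)"
    using X by (intro integrable_const_bound[where B = B]) auto
  then show "X \<in> L2 M"
    using X by (simp add: L2_def)
  show "law M X \<in> P2"
    using X int prob_space_distr[OF X(1)] by (simp add: P2_def law_def integrable_distr_eq)
qed

definition grid_quantizer :: "real \<Rightarrow> 'a::euclidean_space \<Rightarrow> 'a" where
  "grid_quantizer m z =
    (if norm z \<le> m then (\<Sum>b\<in>Basis. (of_int \<lfloor>m * (z \<bullet> b)\<rfloor> / m) *\<^sub>R b) else 0)"

lemma borel_measurable_grid_quantizer [measurable]:
  "grid_quantizer m \<in> borel_measurable borel"
  unfolding grid_quantizer_def by measurable

lemma finite_range_grid_quantizer: "finite (range (grid_quantizer m :: 'a::euclidean_space \<Rightarrow> 'a))"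
proof -
  define K where "K = \<lceil>m * m\<rceil>"
  define grid_point :: "('a \<Rightarrow> int) \<Rightarrow> 'a" where
    "grid_point k = (\<Sum>b\<in>Basis. (of_int (k b) / m) *\<^sub>R b)" for k
  have "grid_quantizer m z \<in> insert 0 (grid_point ` (Basis \<rightarrow>\<^sub>E {-K..K}))" for z :: 'a
  proof (cases "norm z \<le> m")
    case True
    have "\<lfloor>m * (z \<bullet> b)\<rfloor> \<in> {-K..K}" if "b \<in> Basis" for b
    proof -
      have "\<bar>z \<bullet> b\<bar> \<le> m"
        using Basis_le_norm[OF that, of z] True by linarith
      then have "\<bar>m * (z \<bullet> b)\<bar> \<le> m * m"
        using True norm_ge_zero[of z] by (simp add: abs_mult mult_left_mono)
      then show ?thesis
        unfolding K_def by (simp add: floor_le_iff le_ceiling_iff abs_le_iff; linarith)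
    qed
    then have "restrict (\<lambda>b. \<lfloor>m * (z \<bullet> b)\<rfloor>) Basis \<in> Basis \<rightarrow>\<^sub>E {-K..K}"
      by auto
    moreover have "grid_quantizer m z = grid_point (restrict (\<lambda>b. \<lfloor>m * (z \<bullet> b)\<rfloor>) Basis)"
      using True unfolding grid_quantizer_def grid_point_def by (auto intro!: sum.cong)
    ultimately show ?thesis
      by blast
  qed (simp add: grid_quantizer_def)
  then have "range (grid_quantizer m) \<subseteq> insert 0 (grid_point ` (Basis \<rightarrow>\<^sub>E {-K..K}))"
    by blast
  then show ?thesis
    by (rule finite_subset) (auto intro!: finite_PiE finite_imageI)
qed

lemma norm_diff_grid_quantizer_le:
  fixes z :: "'a::euclidean_space"
  assumes "0 < m" "norm z \<le> m"
  shows "norm (z - grid_quantizer m z) \<le> DIM('a) / m"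
proof -
  have "z - grid_quantizer m z = (\<Sum>b\<in>Basis. (z \<bullet> b - of_int \<lfloor>m * (z \<bullet> b)\<rfloor> / m) *\<^sub>R b)"
    using assms
    by (simp add: grid_quantizer_def scaleR_diff_left sum_subtractf euclidean_representation)
  also have "norm \<dots> \<le> (\<Sum>b\<in>Basis. \<bar>z \<bullet> b - of_int \<lfloor>m * (z \<bullet> b)\<rfloor> / m\<bar>)"
    by (rule norm_sum[THEN order_trans]) simp
  also have "\<dots> \<le> (\<Sum>b\<in>(Basis :: 'a set). 1 / m)"
  proof (rule sum_mono)
    fix b :: 'a
    have "0 \<le> m * (z \<bullet> b) - of_int \<lfloor>m * (z \<bullet> b)\<rfloor>" "m * (z \<bullet> b) - of_int \<lfloor>m * (z \<bullet> b)\<rfloor> < 1"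
      by linarith+
    moreover have "z \<bullet> b - of_int \<lfloor>m * (z \<bullet> b)\<rfloor> / m = (m * (z \<bullet> b) - of_int \<lfloor>m * (z \<bullet> b)\<rfloor>) / m"
      using assms by (simp add: field_simps)
    ultimately show "\<bar>z \<bullet> b - of_int \<lfloor>m * (z \<bullet> b)\<rfloor> / m\<bar> \<le> 1 / m"
      using assms by (simp add: divide_right_mono)
  qed
  finally show ?thesis
    by simp
qed

lemma sq_norm_diff_grid_quantizer_le:
  fixes z :: "'a::euclidean_space"
  assumes "1 \<le> m"
  shows "(norm (z - grid_quantizer m z))\<^sup>2 \<le> (real DIM('a))\<^sup>2 + (norm z)\<^sup>2"
proof (cases "norm z \<le> m")
  case True
  have "norm (z - grid_quantizer m z) \<le> DIM('a) / m"
    using assms True by (intro norm_diff_grid_quantizer_le) auto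
  also have "\<dots> \<le> DIM('a)"
    using assms by (simp add: divide_le_eq)
  finally have "(norm (z - grid_quantizer m z))\<^sup>2 \<le> (real DIM('a))\<^sup>2"
    by (simp add: power_mono)
  then show ?thesis
    by (simp add: add_increasing2)
qed (simp add: grid_quantizer_def)

lemma grid_quantizer_tendsto: "(\<lambda>n. grid_quantizer (Suc n) z) \<longlonglongrightarrow> (z :: 'a::euclidean_space)"
proof -
  have "eventually (\<lambda>n. norm z \<le> real (Suc n)) sequentially"
    using eventually_ge_at_top[of "nat \<lceil>norm z\<rceil>"]
    by eventually_elim (use real_nat_ceiling_ge[of "norm z"] in linarith)
  then have "eventually (\<lambda>n. norm (z - grid_quantizer (Suc n) z) \<le> DIM('a) / Suc n) sequentially"
    by eventually_elim (rule norm_diff_grid_quantizer_le, auto)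
  then have "(\<lambda>n. z - grid_quantizer (Suc n) z) \<longlonglongrightarrow> 0"
    by (rule Lim_null_comparison) (rule LIMSEQ_Suc[OF lim_const_over_n])
  from tendsto_diff[OF tendsto_const[of z] this] show ?thesis
    by simp
qed

lemma P2_grid_quantizer_tendsto:
  fixes \<mu> :: "'a::euclidean_space measure"
  assumes "\<mu> \<in> P2"
  shows "(\<lambda>n. \<integral>\<^sup>+z. ennreal ((norm (z - grid_quantizer (Suc n) z))\<^sup>2) \<partial>\<mu>) \<longlonglongrightarrow> 0"
proof -
  have sets_\<mu> [measurable_cong]: "sets \<mu> = sets borel" and "finite_measure \<mu>"
    and moment: "integrable \<mu> (\<lambda>z. (norm z)\<^sup>2)"
    using assms by (auto simp: P2_def prob_space_def)
  define d where "d = real DIM('a)"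
  have "integrable \<mu> (\<lambda>z. d\<^sup>2 + (norm z)\<^sup>2)"
    using moment \<open>finite_measure \<mu>\<close>
    by (intro Bochner_Integration.integrable_add finite_measure.integrable_const)
  then have "(\<integral>\<^sup>+z. ennreal (d\<^sup>2 + (norm z)\<^sup>2) \<partial>\<mu>) < \<infinity>"
    by (auto dest!: integrableD(2) simp: top.not_eq_extremum)
  moreover have
    "AE z in \<mu>. ennreal ((norm (z - grid_quantizer (Suc n) z))\<^sup>2) \<le> ennreal (d\<^sup>2 + (norm z)\<^sup>2)" for n
    unfolding d_def by (intro AE_I2 ennreal_leI sq_norm_diff_grid_quantizer_le) simp
  moreover have "AE z in \<mu>. (\<lambda>n. ennreal ((norm (z - grid_quantizer (Suc n) z))\<^sup>2)) \<longlonglongrightarrow> ennreal 0"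
  proof (rule AE_I2)
    fix z :: 'a
    have "(\<lambda>n. (norm (z - grid_quantizer (Suc n) z))\<^sup>2) \<longlonglongrightarrow> (norm (z - z))\<^sup>2"
      by (intro tendsto_intros grid_quantizer_tendsto)
    then show "(\<lambda>n. ennreal ((norm (z - grid_quantizer (Suc n) z))\<^sup>2)) \<longlonglongrightarrow> ennreal 0"
      by (intro tendsto_ennrealI) simp
  qed
  ultimately have "(\<lambda>n. \<integral>\<^sup>+z. ennreal ((norm (z - grid_quantizer (Suc n) z))\<^sup>2) \<partial>\<mu>)
      \<longlonglongrightarrow> (\<integral>\<^sup>+z. ennreal 0 \<partial>\<mu>)"
    by (intro nn_integral_dominated_convergence) auto
  then show ?thesis
    by simp
qed

lemma P2_nn_integral_sq_dist_finite:
  fixes \<mu> :: "'a::euclidean_space measure"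
  assumes "\<mu> \<in> P2"
  shows "(\<integral>\<^sup>+z. ennreal ((norm (z - a))\<^sup>2) \<partial>\<mu>) < \<infinity>"
proof -
  have "finite_measure \<mu>" and moment: "integrable \<mu> (\<lambda>z. (norm z)\<^sup>2)"
    using assms by (auto simp: P2_def prob_space_def)
  then have "integrable \<mu> (\<lambda>z. 2 * (norm z)\<^sup>2 + 2 * (norm a)\<^sup>2)"
    by (intro Bochner_Integration.integrable_add integrable_mult_right
        finite_measure.integrable_const)
  then have "(\<integral>\<^sup>+z. ennreal (2 * (norm z)\<^sup>2 + 2 * (norm a)\<^sup>2) \<partial>\<mu>) < \<infinity>"
    by (auto dest!: integrableD(2) simp: top.not_eq_extremum)
  moreover have "(norm (z - a))\<^sup>2 \<le> 2 * (norm z)\<^sup>2 + 2 * (norm a)\<^sup>2" for z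
  proof -
    have "(norm (z - a))\<^sup>2 \<le> (norm z + norm a)\<^sup>2"
      using norm_triangle_ineq4[of z a] by (intro power_mono) auto
    also have "\<dots> \<le> 2 * (norm z)\<^sup>2 + 2 * (norm a)\<^sup>2"
      using sum_squares_bound[of "norm z" "norm a"] by (simp add: power2_sum)
    finally show ?thesis .
  qed
  then have "(\<integral>\<^sup>+z. ennreal ((norm (z - a))\<^sup>2) \<partial>\<mu>)
      \<le> (\<integral>\<^sup>+z. ennreal (2 * (norm z)\<^sup>2 + 2 * (norm a)\<^sup>2) \<partial>\<mu>)"
    by (intro nn_integral_mono ennreal_leI)
  ultimately show ?thesis
    by (rule le_less_trans[rotated])
qed

lemma P2_small_perturbation_weight:
  fixes \<mu> :: "'a::euclidean_space measure"
  assumes \<mu>: "\<mu> \<in> P2" and A: "finite A" and \<eta>: "0 < \<eta>"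
  obtains \<epsilon> where "0 < \<epsilon>" "\<epsilon> \<le> 1"
    "\<And>a. a \<in> A \<Longrightarrow> ennreal \<epsilon> * (\<integral>\<^sup>+z. ennreal ((norm (z - a))\<^sup>2) \<partial>\<mu>) \<le> ennreal \<eta>"
proof
  define I where "I a = enn2real (\<integral>\<^sup>+z. ennreal ((norm (z - a))\<^sup>2) \<partial>\<mu>)" for a
  define C where "C = (\<Sum>a\<in>A. I a)"
  have "0 \<le> C"
    unfolding C_def I_def by (simp add: sum_nonneg)
  show "0 < min 1 (\<eta> / (C + 1))" "min 1 (\<eta> / (C + 1)) \<le> 1"
    using \<eta> \<open>0 \<le> C\<close> by auto
  fix a assume "a \<in> A"
  then have "I a \<le> C"
    unfolding C_def I_def using A by (intro member_le_sum) auto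
  then have "min 1 (\<eta> / (C + 1)) * I a \<le> \<eta> / (C + 1) * (C + 1)"
    using \<eta> \<open>0 \<le> C\<close> by (intro mult_mono) (simp_all add: I_def)
  also have "\<dots> = \<eta>"
    using \<open>0 \<le> C\<close> by simp
  finally have "ennreal (min 1 (\<eta> / (C + 1)) * I a) \<le> ennreal \<eta>"
    by (rule ennreal_leI)
  moreover have "(\<integral>\<^sup>+z. ennreal ((norm (z - a))\<^sup>2) \<partial>\<mu>) = ennreal (I a)"
    unfolding I_def using P2_nn_integral_sq_dist_finite[OF \<mu>] by simp
  ultimately show "ennreal (min 1 (\<eta> / (C + 1))) * (\<integral>\<^sup>+z. ennreal ((norm (z - a))\<^sup>2) \<partial>\<mu>)
      \<le> ennreal \<eta>"
    using \<eta> \<open>0 \<le> C\<close> by (simp add: ennreal_mult')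
qed

text \<open>The law \<open>(1 - \<epsilon>) T#\<mu> + \<epsilon> \<delta>_a\<close>, presented as an image of \<open>\<mu> \<otimes> Bernoulli(\<epsilon>)\<close> so that it comes
  with a coupling to \<open>\<mu>\<close>.\<close>

definition perturbed_law :: "'a::euclidean_space measure \<Rightarrow> ('a \<Rightarrow> 'a) \<Rightarrow> real \<Rightarrow> 'a \<Rightarrow> 'a measure" where
  "perturbed_law \<mu> T \<epsilon> a =
    distr (\<mu> \<Otimes>\<^sub>M measure_pmf (bernoulli_pmf \<epsilon>)) borel (\<lambda>p. if snd p then a else T (fst p))"

lemma nn_integral_pair_bernoulli:
  assumes f: "f \<in> borel_measurable (\<mu> \<Otimes>\<^sub>M measure_pmf (bernoulli_pmf \<epsilon>))" and \<epsilon>: "0 \<le> \<epsilon>" "\<epsilon> \<le> 1"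
  shows "(\<integral>\<^sup>+p. f p \<partial>(\<mu> \<Otimes>\<^sub>M measure_pmf (bernoulli_pmf \<epsilon>)))
    = ennreal \<epsilon> * (\<integral>\<^sup>+z. f (z, True) \<partial>\<mu>) + ennreal (1 - \<epsilon>) * (\<integral>\<^sup>+z. f (z, False) \<partial>\<mu>)"
proof -
  have "(\<integral>\<^sup>+p. f p \<partial>(\<mu> \<Otimes>\<^sub>M measure_pmf (bernoulli_pmf \<epsilon>)))
      = (\<integral>\<^sup>+z. \<integral>\<^sup>+b. f (z, b) \<partial>measure_pmf (bernoulli_pmf \<epsilon>) \<partial>\<mu>)"
    by (rule measure_pmf.nn_integral_fst[OF f, symmetric])
  also have "\<dots> = (\<integral>\<^sup>+z. ennreal \<epsilon> * f (z, True) + ennreal (1 - \<epsilon>) * f (z, False) \<partial>\<mu>)"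
    using \<epsilon> by (intro nn_integral_cong) (simp add: nn_integral_measure_pmf_support[of UNIV]
        UNIV_bool mult.commute)
  also have "\<dots> = ennreal \<epsilon> * (\<integral>\<^sup>+z. f (z, True) \<partial>\<mu>) + ennreal (1 - \<epsilon>) * (\<integral>\<^sup>+z. f (z, False) \<partial>\<mu>)"
    using measurable_Pair1[OF f] by (simp add: nn_integral_add nn_integral_cmult)
  finally show ?thesis .
qed

lemma W2_perturbed_law_le:
  fixes \<mu> :: "'a::euclidean_space measure"
  assumes \<mu>: "prob_space \<mu>" "sets \<mu> = sets borel" and T: "T \<in> borel_measurable borel"
    and \<epsilon>: "0 \<le> \<epsilon>" "\<epsilon> \<le> 1"
    and c\<^sub>1: "(\<integral>\<^sup>+z. ennreal ((norm (z - T z))\<^sup>2) \<partial>\<mu>) \<le> ennreal c\<^sub>1" "0 \<le> c\<^sub>1"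
    and c\<^sub>2: "ennreal \<epsilon> * (\<integral>\<^sup>+z. ennreal ((norm (z - a))\<^sup>2) \<partial>\<mu>) \<le> ennreal c\<^sub>2" "0 \<le> c\<^sub>2"
  shows "W2 \<mu> (perturbed_law \<mu> T \<epsilon> a) \<le> sqrt (c\<^sub>1 + c\<^sub>2)"
proof -
  note sets_\<mu> [measurable_cong] = \<mu>(2) and T [measurable]
  define N where "N = \<mu> \<Otimes>\<^sub>M measure_pmf (bernoulli_pmf \<epsilon>)"
  define G where "G p = (if snd p then a else T (fst p))" for p
  have N: "prob_space N"
    unfolding N_def using \<mu>(1) prob_space_measure_pmf by (rule prob_space_pair)
  have [measurable]: "fst \<in> borel_measurable N" "G \<in> borel_measurable N"
    unfolding N_def G_def by measurable
  have "distr N borel fst = distr N \<mu> fst"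
    using \<mu>(2) by (intro distr_cong) auto
  then have \<mu>_eq: "\<mu> = distr N borel fst"
    unfolding N_def measure_pmf.distr_pair_fst by simp
  have "ennreal (1 - \<epsilon>) * (\<integral>\<^sup>+z. ennreal ((norm (z - T z))\<^sup>2) \<partial>\<mu>)
      \<le> (\<integral>\<^sup>+z. ennreal ((norm (z - T z))\<^sup>2) \<partial>\<mu>)"
    using mult_right_mono[of "ennreal (1 - \<epsilon>)" 1] \<epsilon> by (simp add: ennreal_le_1)
  then have "(\<integral>\<^sup>+p. ennreal ((norm (fst p - G p))\<^sup>2) \<partial>N)
      \<le> ennreal \<epsilon> * (\<integral>\<^sup>+z. ennreal ((norm (z - a))\<^sup>2) \<partial>\<mu>) + (\<integral>\<^sup>+z. ennreal ((norm (z - T z))\<^sup>2) \<partial>\<mu>)"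
    unfolding N_def using \<epsilon> by (subst nn_integral_pair_bernoulli) (simp_all add: G_def add_left_mono)
  also have "\<dots> \<le> ennreal (c\<^sub>1 + c\<^sub>2)"
    using c\<^sub>1 c\<^sub>2 by (simp add: ennreal_plus add_mono add.commute)
  finally have "W2 (distr N borel fst) (distr N borel G) \<le> sqrt (c\<^sub>1 + c\<^sub>2)"
    using N c\<^sub>1(2) c\<^sub>2(2) by (intro W2_distr_le) auto
  then show ?thesis
    unfolding perturbed_law_def \<mu>_eq[symmetric] N_def[symmetric] G_def[symmetric] .
qed

lemma distr_comp_eq:
  assumes "distr M borel W = distr N borel Q" "W \<in> borel_measurable M" "Q \<in> borel_measurable N"
    and "g \<in> borel_measurable borel"
  shows "distr M borel (g \<circ> W) = distr N borel (g \<circ> Q)"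
  by (metis assms distr_distr)

lemma measure_pair_bernoulli_True:
  assumes "prob_space \<mu>" "0 \<le> \<epsilon>" "\<epsilon> \<le> 1"
  shows "measure (\<mu> \<Otimes>\<^sub>M measure_pmf (bernoulli_pmf \<epsilon>)) (space \<mu> \<times> {True}) = \<epsilon>"
  using measure_pmf.emeasure_pair_measure_Times[of "space \<mu>" \<mu> "{True}" "bernoulli_pmf \<epsilon>"] assms
  by (simp add: measure_def prob_space.emeasure_space_1 emeasure_pmf_single)

lemma atomless_realize_perturbed_pair:
  fixes \<mu> :: "'a::euclidean_space measure"
  assumes M: "prob_space M" "atomless M" and \<mu>: "prob_space \<mu>" "sets \<mu> = sets borel"
    and T: "T \<in> borel_measurable borel" "finite (range T)" and \<epsilon>: "0 \<le> \<epsilon>" "\<epsilon> \<le> 1"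
  obtains X Y where "X \<in> borel_measurable M" "finite (X ` space M)"
    "Y \<in> borel_measurable M" "finite (Y ` space M)"
    "law M X = perturbed_law \<mu> T \<epsilon> x" "law M Y = perturbed_law \<mu> T \<epsilon> y"
    "\<And>\<omega>. \<omega> \<in> space M \<Longrightarrow> X \<omega> = Y \<omega> \<or> (X \<omega> = x \<and> Y \<omega> = y)"
    "\<epsilon> \<le> measure M {\<omega> \<in> space M. X \<omega> = x \<and> Y \<omega> = y}"
proof -
  note sets_\<mu> [measurable_cong] = \<mu>(2) and T(1) [measurable]
  define N where "N = \<mu> \<Otimes>\<^sub>M measure_pmf (bernoulli_pmf \<epsilon>)"
  define Q where "Q p = (if snd p then (x, y) else (T (fst p), T (fst p)))" for p
  define R where "R = insert (x, y) ((\<lambda>v. (v, v)) ` range T)"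
  have N: "prob_space N"
    unfolding N_def using \<mu>(1) prob_space_measure_pmf by (rule prob_space_pair)
  interpret N: prob_space N
    by (fact N)
  have Q [measurable]: "Q \<in> borel_measurable N"
    unfolding N_def Q_def by measurable
  have "finite R" "Q ` space N \<subseteq> R"
    using T(2) by (auto simp: R_def Q_def)
  then obtain W where W [measurable]: "W \<in> borel_measurable M" and "W ` space M \<subseteq> R"
    and law_W: "distr M borel W = distr N borel Q"
    using atomless_realize_finite_distr[OF M N Q] by blast
  then have W_values: "fst (W \<omega>) = snd (W \<omega>) \<or> (fst (W \<omega>) = x \<and> snd (W \<omega>) = y)"
    if "\<omega> \<in> space M" for \<omega>
    using that unfolding R_def by auto
  have fst_snd [measurable]: "fst \<in> borel_measurable (borel :: ('a \<times> 'a) measure)"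
    "snd \<in> borel_measurable (borel :: ('a \<times> 'a) measure)"
    by (simp_all add: borel_prod[symmetric])
  have Q_components: "fst \<circ> Q = (\<lambda>p. if snd p then x else T (fst p))"
    "snd \<circ> Q = (\<lambda>p. if snd p then y else T (fst p))"
    by (auto simp: Q_def)
  have "\<epsilon> = measure N (space \<mu> \<times> {True})"
    unfolding N_def using \<mu>(1) \<epsilon> by (rule measure_pair_bernoulli_True[symmetric])
  also have "\<dots> \<le> measure N (Q -` {(x, y)} \<inter> space N)"
    using measurable_sets[OF Q, of "{(x, y)}"]
    by (intro N.finite_measure_mono) (auto simp: N_def Q_def space_pair_measure)
  also have "\<dots> = measure M (W -` {(x, y)} \<inter> space M)"
    using measure_distr[OF W, of "{(x, y)}"] measure_distr[OF Q, of "{(x, y)}"] law_W by simp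
  finally have "\<epsilon> \<le> measure M {\<omega> \<in> space M. fst (W \<omega>) = x \<and> snd (W \<omega>) = y}"
    by (simp add: vimage_def Int_def prod_eq_iff conj_commute)
  moreover have "finite (fst ` W ` space M)" "finite (snd ` W ` space M)"
    using \<open>finite R\<close> \<open>W ` space M \<subseteq> R\<close> by (auto intro: finite_subset)
  moreover have "law M (fst \<circ> W) = perturbed_law \<mu> T \<epsilon> x" "law M (snd \<circ> W) = perturbed_law \<mu> T \<epsilon> y"
    unfolding law_def distr_comp_eq[OF law_W W Q fst_snd(1)] distr_comp_eq[OF law_W W Q fst_snd(2)]
    by (simp_all add: perturbed_law_def N_def Q_components)
  ultimately show ?thesis
    using that[of "fst \<circ> W" "snd \<circ> W"] W_values by (auto simp: image_comp)
qed

lemma L2_monotone_two_point_deviation: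
  assumes M: "prob_space M" and mono: "L2_monotone M U"
    and X: "X \<in> borel_measurable M" "finite (X ` space M)"
    and Y: "Y \<in> borel_measurable M" "finite (Y ` space M)"
    and deviation: "\<And>\<omega>. \<omega> \<in> space M \<Longrightarrow> X \<omega> = Y \<omega> \<or> (X \<omega> = x \<and> Y \<omega> = y)"
    and positive: "0 < measure M {\<omega> \<in> space M. X \<omega> = x \<and> Y \<omega> = y}"
  shows "0 \<le> (U x (law M X) - U y (law M Y)) \<bullet> (x - y)"
proof -
  define E where "E = {\<omega> \<in> space M. X \<omega> = x \<and> Y \<omega> = y}"
  define c where "c = (U x (law M X) - U y (law M Y)) \<bullet> (x - y)"
  have "E \<in> sets M"
    unfolding E_def using X(1) Y(1) by measurable
  have integrand: "(U (X \<omega>) (law M X) - U (Y \<omega>) (law M Y)) \<bullet> (X \<omega> - Y \<omega>) = c * indicator E \<omega>"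
    if "\<omega> \<in> space M" for \<omega>
    using deviation[OF that] that by (cases "\<omega> \<in> E") (auto simp: E_def c_def)
  have "0 \<le> (\<integral>\<omega>. (U (X \<omega>) (law M X) - U (Y \<omega>) (law M Y)) \<bullet> (X \<omega> - Y \<omega>) \<partial>M)"
    using mono finite_range_L2_P2(1)[OF M X] finite_range_L2_P2(1)[OF M Y]
    unfolding L2_monotone_def by blast
  also have "\<dots> = c * measure M E"
    using integrand \<open>E \<in> sets M\<close> by (simp add: Bochner_Integration.integral_cong)
  finally show ?thesis
    using positive by (simp add: E_def c_def zero_le_mult_iff)
qed

lemma L2_monotone_nearby_laws:
  fixes U :: "'a::euclidean_space \<Rightarrow> 'a measure \<Rightarrow> 'a"
  assumes M: "prob_space M" "atomless M" and mono: "L2_monotone M U"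
    and \<mu>: "\<mu> \<in> P2" and \<delta>: "0 < \<delta>"
  shows "\<exists>\<nu>\<^sub>1\<in>P2. \<exists>\<nu>\<^sub>2\<in>P2. W2 \<mu> \<nu>\<^sub>1 < \<delta> \<and> W2 \<mu> \<nu>\<^sub>2 < \<delta> \<and> 0 \<le> (U x \<nu>\<^sub>1 - U y \<nu>\<^sub>2) \<bullet> (x - y)"
proof -
  have \<mu>_space: "prob_space \<mu>" "sets \<mu> = sets borel"
    using \<mu> by (auto simp: P2_def)
  obtain n where quantization:
    "(\<integral>\<^sup>+z. ennreal ((norm (z - grid_quantizer (Suc n) z))\<^sup>2) \<partial>\<mu>) < ennreal (\<delta>\<^sup>2 / 4)"
    using order_tendstoD(2)[OF P2_grid_quantizer_tendsto[OF \<mu>], of "ennreal (\<delta>\<^sup>2 / 4)"] \<delta>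
    by (auto simp: eventually_sequentially)
  define T :: "'a \<Rightarrow> 'a" where "T = grid_quantizer (Suc n)"
  obtain \<epsilon> where \<epsilon>: "0 < \<epsilon>" "\<epsilon> \<le> 1" and weight:
    "\<And>a. a \<in> {x, y} \<Longrightarrow> ennreal \<epsilon> * (\<integral>\<^sup>+z. ennreal ((norm (z - a))\<^sup>2) \<partial>\<mu>) \<le> ennreal (\<delta>\<^sup>2 / 4)"
    using P2_small_perturbation_weight[OF \<mu>, of "{x, y}" "\<delta>\<^sup>2 / 4"] \<delta> by auto
  have close: "W2 \<mu> (perturbed_law \<mu> T \<epsilon> a) < \<delta>" if "a \<in> {x, y}" for a
  proof -
    have "W2 \<mu> (perturbed_law \<mu> T \<epsilon> a) \<le> sqrt (\<delta>\<^sup>2 / 4 + \<delta>\<^sup>2 / 4)"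
      using \<mu>_space \<epsilon> quantization weight[OF that]
      by (intro W2_perturbed_law_le) (auto simp: T_def)
    also have "\<dots> < sqrt (\<delta>\<^sup>2)"
      using \<delta> by (intro real_sqrt_less_mono) simp
    finally show ?thesis
      using \<delta> by simp
  qed
  obtain X Y where X: "X \<in> borel_measurable M" "finite (X ` space M)"
    and Y: "Y \<in> borel_measurable M" "finite (Y ` space M)"
    and laws: "law M X = perturbed_law \<mu> T \<epsilon> x" "law M Y = perturbed_law \<mu> T \<epsilon> y"
    and deviation: "\<And>\<omega>. \<omega> \<in> space M \<Longrightarrow> X \<omega> = Y \<omega> \<or> (X \<omega> = x \<and> Y \<omega> = y)"
    and "\<epsilon> \<le> measure M {\<omega> \<in> space M. X \<omega> = x \<and> Y \<omega> = y}"
    by (rule atomless_realize_perturbed_pair[OF M \<mu>_space, of T])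
      (use \<epsilon> in \<open>auto simp: T_def finite_range_grid_quantizer\<close>)
  with \<epsilon> have "0 \<le> (U x (law M X) - U y (law M Y)) \<bullet> (x - y)"
    by (intro L2_monotone_two_point_deviation[OF M(1) mono X Y deviation]) auto
  then show ?thesis
    using finite_range_L2_P2(2)[OF M(1) X] finite_range_L2_P2(2)[OF M(1) Y] close laws
    by (intro bexI[of _ "law M X"] bexI[of _ "law M Y"] conjI) auto
qed

lemma continuous_P2_tendsto:
  assumes U: "continuous_P2 U" and \<mu>: "\<mu> \<in> P2"
    and \<nu>: "\<And>n. \<nu> n \<in> P2" "(\<lambda>n. W2 \<mu> (\<nu> n)) \<longlonglongrightarrow> 0"
  shows "(\<lambda>n. U x (\<nu> n)) \<longlonglongrightarrow> U x \<mu>"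
proof (rule tendstoI)
  fix e :: real assume "0 < e"
  then obtain \<delta> where "0 < \<delta>" and close: "\<And>\<nu>'. \<nu>' \<in> P2 \<Longrightarrow> W2 \<mu> \<nu>' < \<delta> \<Longrightarrow> dist (U x \<mu>) (U x \<nu>') < e"
    using U \<mu> unfolding continuous_P2_def by (metis dist_self)
  have "dist (U x (\<nu> n)) (U x \<mu>) < e" if "W2 \<mu> (\<nu> n) < \<delta>" for n
    using close[OF \<nu>(1) that] by (simp add: dist_commute)
  then show "eventually (\<lambda>n. dist (U x (\<nu> n)) (U x \<mu>) < e) sequentially"
    using order_tendstoD(2)[OF \<nu>(2) \<open>0 < \<delta>\<close>] by (rule eventually_mono[rotated])
qed

theorem lemma2p8:
  fixes M :: "'b measure" and U :: "'a::euclidean_space \<Rightarrow> 'a measure \<Rightarrow> 'a"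
  assumes "prob_space M" and "atomless M"
    and "continuous_P2 U" and "L2_monotone M U"
  shows "\<forall>\<mu>\<in>P2. \<forall>x y. (U x \<mu> - U y \<mu>) \<bullet> (x - y) \<ge> 0"
proof (intro ballI allI)
  fix \<mu> :: "'a measure" and x y :: 'a
  assume \<mu>: "\<mu> \<in> P2"
  have "\<forall>n. \<exists>\<nu>\<^sub>1\<in>P2. \<exists>\<nu>\<^sub>2\<in>P2. W2 \<mu> \<nu>\<^sub>1 < inverse (real (Suc n)) \<and> W2 \<mu> \<nu>\<^sub>2 < inverse (real (Suc n))
      \<and> 0 \<le> (U x \<nu>\<^sub>1 - U y \<nu>\<^sub>2) \<bullet> (x - y)"
    using L2_monotone_nearby_laws[OF assms(1,2,4) \<mu>] by simp
  then obtain \<nu>\<^sub>1 \<nu>\<^sub>2 where \<nu>: "\<And>n. \<nu>\<^sub>1 n \<in> P2" "\<And>n. \<nu>\<^sub>2 n \<in> P2"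
    "\<And>n. W2 \<mu> (\<nu>\<^sub>1 n) < inverse (real (Suc n))" "\<And>n. W2 \<mu> (\<nu>\<^sub>2 n) < inverse (real (Suc n))"
    and nonneg: "\<And>n. 0 \<le> (U x (\<nu>\<^sub>1 n) - U y (\<nu>\<^sub>2 n)) \<bullet> (x - y)"
    by metis
  have "(\<lambda>n. W2 \<mu> (\<nu>\<^sub>1 n)) \<longlonglongrightarrow> 0" "(\<lambda>n. W2 \<mu> (\<nu>\<^sub>2 n)) \<longlonglongrightarrow> 0"
    using \<nu>(3,4) W2_nonneg
    by (auto intro!: tendsto_sandwich[OF _ _ tendsto_const LIMSEQ_inverse_real_of_nat]
        always_eventually simp: less_imp_le)
  then have "(\<lambda>n. (U x (\<nu>\<^sub>1 n) - U y (\<nu>\<^sub>2 n)) \<bullet> (x - y)) \<longlonglongrightarrow> (U x \<mu> - U y \<mu>) \<bullet> (x - y)"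
    by (intro tendsto_inner tendsto_diff tendsto_const continuous_P2_tendsto[OF assms(3) \<mu>] \<nu>)
  then show "0 \<le> (U x \<mu> - U y \<mu>) \<bullet> (x - y)"
    using nonneg by (intro tendsto_lowerbound[OF _ always_eventually]) auto
qed

end
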